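(* Let $M$ be a matroid on a finite set $E$ with rank function $r$ and closure operator $\mathrm{cl}$, and let $\mathcal{C}$ be a family of circuits of $M$. Let $X\subseteq E$ and let $(C_1,\dots,C_t)$ be a proper $\mathcal{C}$-sequence. Then $r(X)\le|X\cup C_{\le t}|-t$. Moreover, if equality holds, then $C_{\le t}\subseteq\mathrm{cl}(X)$ and every $e\in X\setminus C_{\le t}$ is a coloop of $M|_X$.
   Context: For a sequence of circuits $(C_1,\dots,C_t)$, write $C_{\le i}=\bigcup_{j\le i}C_j$ and $C_{\le0}=\emptyset$. The sequence is proper if $C_i\not\subseteq C_{\le i-1}$ for all $2\le i\le t$. It is a $\mathcal{C}$-sequence if every $C_i$ belongs to $\mathcal{C}$. *)

theory Defs
  imports Main
begin

definition matroid :: "'a set \<Rightarrow> ('a set \<Rightarrow> bool) \<Rightarrow> bool" where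
  "matroid E indep \<longleftrightarrow> finite E \<and> indep {} \<and>
     (\<forall>I. indep I \<longrightarrow> I \<subseteq> E) \<and>
     (\<forall>I J. indep J \<and> I \<subseteq> J \<longrightarrow> indep I) \<and>
     (\<forall>I J. indep I \<and> indep J \<and> card I < card J \<longrightarrow> (\<exists>e\<in>J - I. indep (insert e I)))"

definition rk :: "('a set \<Rightarrow> bool) \<Rightarrow> 'a set \<Rightarrow> nat" where
  "rk indep X = Max (card ` {I. I \<subseteq> X \<and> indep I})"

definition cl :: "'a set \<Rightarrow> ('a set \<Rightarrow> bool) \<Rightarrow> 'a set \<Rightarrow> 'a set" where
  "cl E indep X = {e \<in> E. rk indep (insert e X) = rk indep X}"

definition circuit :: "'a set \<Rightarrow> ('a set \<Rightarrow> bool) \<Rightarrow> 'a set \<Rightarrow> bool" where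
  "circuit E indep C \<longleftrightarrow> C \<subseteq> E \<and> \<not> indep C \<and> (\<forall>D. D \<subset> C \<longrightarrow> indep D)"

definition basis :: "'a set \<Rightarrow> ('a set \<Rightarrow> bool) \<Rightarrow> 'a set \<Rightarrow> bool" where
  "basis E indep B \<longleftrightarrow> indep B \<and> B \<subseteq> E \<and> (\<forall>I. indep I \<and> I \<subseteq> E \<and> B \<subseteq> I \<longrightarrow> I = B)"

definition coloop :: "'a set \<Rightarrow> ('a set \<Rightarrow> bool) \<Rightarrow> 'a \<Rightarrow> bool" where
  "coloop E indep e \<longleftrightarrow> e \<in> E \<and> (\<forall>B. basis E indep B \<longrightarrow> e \<in> B)"

text \<open>Restriction M|X: ground set X, independent sets those of M contained in X.\<close>
definition restr_indep :: "('a set \<Rightarrow> bool) \<Rightarrow> 'a set \<Rightarrow> 'a set \<Rightarrow> bool" where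
  "restr_indep indep X I \<longleftrightarrow> indep I \<and> I \<subseteq> X"

text \<open>Sequences (C_1,...,C_t) are lists; C_{\<le>i} is the union of the first i entries.\<close>
definition upto_union :: "'a set list \<Rightarrow> nat \<Rightarrow> 'a set" where
  "upto_union Cs i = \<Union> (set (take i Cs))"

text \<open>Proper: C_i not contained in C_{\<le>i-1} for 2 \<le> i \<le> t (0-based: 1 \<le> i < t).\<close>
definition proper_seq :: "'a set list \<Rightarrow> bool" where
  "proper_seq Cs \<longleftrightarrow> (\<forall>i. 1 \<le> i \<and> i < length Cs \<longrightarrow> \<not> (Cs ! i \<subseteq> upto_union Cs i))"

definition family_seq :: "'a set set \<Rightarrow> 'a set list \<Rightarrow> bool" where
  "family_seq \<C> Cs \<longleftrightarrow> set Cs \<subseteq> \<C>"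

end

theory Submission
  imports Defs
begin

(* The nullity |A| - r(A) is monotone. In a proper sequence of circuits, C_i has an element e
   outside C_{<=i-1}, and e is spanned by C_i - e; so removing e from C_{<=i} keeps the rank,
   and each step raises the nullity of C_{<=i} by at least one. Hence X \<union> C_{<=t} has nullity
   at least t, which is the inequality. Equality forces r(X \<union> C_{<=t}) = r(X), i.e.
   C_{<=t} \<subseteq> cl(X); and for e in X - C_{<=t} it forces r((X \<union> C_{<=t}) - e) < r(X),
   so no basis of M|X avoids e. *)

definition nullity :: "('a set \<Rightarrow> bool) \<Rightarrow> 'a set \<Rightarrow> int" where
  "nullity indep A = int (card A) - int (rk indep A)"

lemma upto_union_0 [simp]: "upto_union Cs 0 = {}"
  unfolding upto_union_def by simp

lemma upto_union_Suc: "i < length Cs \<Longrightarrow> upto_union Cs (Suc i) = upto_union Cs i \<union> Cs ! i"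
  unfolding upto_union_def by (auto simp add: take_Suc_conv_app_nth)

lemma upto_union_subset: "\<forall>C\<in>set Cs. C \<subseteq> E \<Longrightarrow> upto_union Cs i \<subseteq> E"
  unfolding upto_union_def by (auto dest!: in_set_takeD)

lemma proper_seq_new_elem:
  assumes "proper_seq Cs" "i < length Cs" "Cs ! i \<noteq> {}"
  obtains e where "e \<in> Cs ! i" "e \<notin> upto_union Cs i"
proof (cases "i = 0")
  case True
  then show ?thesis using assms(3) that by auto
next
  case False
  then have "\<not> Cs ! i \<subseteq> upto_union Cs i" using assms(1,2) unfolding proper_seq_def by simp
  then show ?thesis using that by blast
qed

context
  fixes E :: "'a set" and indep :: "'a set \<Rightarrow> bool"
  assumes M: "matroid E indep"
begin

lemma finite_ground: "finite E"
  using M unfolding matroid_def by blast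

lemma indep_subset_ground: "indep I \<Longrightarrow> I \<subseteq> E"
  using M unfolding matroid_def by blast

lemma finite_indep: "indep I \<Longrightarrow> finite I"
  using finite_ground indep_subset_ground finite_subset by blast

lemma indep_empty: "indep {}"
  using M unfolding matroid_def by blast

lemma indep_subset: "indep J \<Longrightarrow> I \<subseteq> J \<Longrightarrow> indep I"
  using M unfolding matroid_def by blast

lemma indep_augment:
  "indep I \<Longrightarrow> indep J \<Longrightarrow> card I < card J \<Longrightarrow> \<exists>e\<in>J - I. indep (insert e I)"
  using M unfolding matroid_def by blast

lemma circuit_nonempty: "circuit E indep C \<Longrightarrow> C \<noteq> {}"
  using indep_empty unfolding circuit_def by blast

lemma finite_card_indep_subsets: "finite (card ` {I. I \<subseteq> X \<and> indep I})"
proof -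
  have "{I. I \<subseteq> X \<and> indep I} \<subseteq> Pow E" using indep_subset_ground by blast
  then show ?thesis using finite_ground by (meson finite_Pow_iff finite_imageI finite_subset)
qed

lemma card_le_rk: "I \<subseteq> X \<Longrightarrow> indep I \<Longrightarrow> card I \<le> rk indep X"
  unfolding rk_def by (rule Max_ge[OF finite_card_indep_subsets]) blast

lemma obtain_indep_card_rk:
  obtains I where "I \<subseteq> X" "indep I" "card I = rk indep X"
proof -
  have "rk indep X \<in> card ` {I. I \<subseteq> X \<and> indep I}"
    unfolding rk_def using finite_card_indep_subsets indep_empty by (intro Max_in) auto
  then show ?thesis using that by auto
qed

lemma rk_mono: "X \<subseteq> Y \<Longrightarrow> rk indep X \<le> rk indep Y"
  by (metis obtain_indep_card_rk card_le_rk subset_trans)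

lemma rk_le_card: "finite X \<Longrightarrow> rk indep X \<le> card X"
  by (metis obtain_indep_card_rk card_mono)

lemma rk_le_rk_plus_card_Diff:
  assumes "finite B"
  shows "rk indep B \<le> rk indep A + card (B - A)"
proof -
  obtain I where I: "I \<subseteq> B" "indep I" "card I = rk indep B" by (rule obtain_indep_card_rk)
  have "card I \<le> card (I \<inter> A) + card (I - A)"
    by (metis Int_Diff_Un card_Un_le)
  moreover have "card (I \<inter> A) \<le> rk indep A"
    using I(2) by (intro card_le_rk) (auto elim: indep_subset)
  moreover have "card (I - A) \<le> card (B - A)"
    using I(1) assms by (intro card_mono) auto
  ultimately show ?thesis using I(3) by linarith
qed

lemma indep_extend_to_rk:
  assumes "indep J" "J \<subseteq> X"
  obtains K where "J \<subseteq> K" "K \<subseteq> X" "indep K" "card K = rk indep X"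
proof -
  let ?S = "{K. J \<subseteq> K \<and> K \<subseteq> X \<and> indep K}"
  have "\<forall>K\<in>?S. card K < Suc (card E)"
    using finite_ground indep_subset_ground by (auto simp: le_imp_less_Suc card_mono)
  then obtain K where K: "K \<in> ?S" and K_max: "\<And>K'. K' \<in> ?S \<Longrightarrow> card K' \<le> card K"
    using ex_has_greatest_nat[of "\<lambda>K. K \<in> ?S" J card "Suc (card E)"] assms by blast
  obtain I where I: "I \<subseteq> X" "indep I" "card I = rk indep X" by (rule obtain_indep_card_rk)
  have "\<not> card K < card I"
  proof
    assume "card K < card I"
    then obtain f where f: "f \<in> I - K" "indep (insert f K)"
      using indep_augment I(2) K by blast
    then have "card (insert f K) \<le> card K" using K I(1) by (intro K_max) auto
    then show False using f(1) finite_indep K by simp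
  qed
  moreover have "card K \<le> rk indep X" using K card_le_rk by blast
  ultimately show ?thesis using that K I(3) by force
qed

lemma card_basis_restr:
  assumes "basis X (restr_indep indep X) B"
  shows "card B = rk indep X"
proof -
  have B: "indep B" "B \<subseteq> X" using assms unfolding basis_def restr_indep_def by auto
  obtain K where K: "B \<subseteq> K" "K \<subseteq> X" "indep K" "card K = rk indep X"
    using indep_extend_to_rk[OF B] .
  then have "K = B" using assms unfolding basis_def restr_indep_def by blast
  then show ?thesis using K(4) by simp
qed

lemma rk_Diff_circuit_elem:
  assumes "circuit E indep C" "e \<in> C" "C \<subseteq> B"
  shows "rk indep (B - {e}) = rk indep B"
proof -
  have "indep (C - {e})" "C - {e} \<subseteq> B" using assms unfolding circuit_def by auto
  then obtain K where K: "C - {e} \<subseteq> K" "K \<subseteq> B" "indep K" "card K = rk indep B"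
    by (rule indep_extend_to_rk)
  have "e \<notin> K"
  proof
    assume "e \<in> K"
    then have "C \<subseteq> K" using K(1) by blast
    then show False using assms(1) K(3) indep_subset unfolding circuit_def by blast
  qed
  then have "rk indep B \<le> rk indep (B - {e})" using K by (metis card_le_rk Diff_empty subset_Diff_insert)
  then show ?thesis using rk_mono[of "B - {e}" B] by simp
qed

lemma nullity_mono: "A \<subseteq> B \<Longrightarrow> finite B \<Longrightarrow> nullity indep A \<le> nullity indep B"
  using rk_le_rk_plus_card_Diff[of B A] card_Diff_subset[of A B]
    card_mono[of B A] finite_subset[of A B]
  unfolding nullity_def by (simp add: of_nat_diff)

lemma nullity_Diff_circuit_elem:
  assumes "circuit E indep C" "e \<in> C" "C \<subseteq> B" "finite B"
  shows "nullity indep B = nullity indep (B - {e}) + 1"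
  using rk_Diff_circuit_elem[OF assms(1-3)] card_Suc_Diff1[OF assms(4), of e] assms(2,3)
  unfolding nullity_def by auto

lemma nullity_upto_union_ge:
  assumes "proper_seq Cs" "\<forall>C\<in>set Cs. circuit E indep C" "i \<le> length Cs"
  shows "int i \<le> nullity indep (upto_union Cs i)"
  using assms(3)
proof (induction i)
  case 0
  then show ?case using rk_le_card[of "{}"] by (simp add: nullity_def)
next
  case (Suc i)
  let ?A = "upto_union Cs i" and ?B = "upto_union Cs (Suc i)" and ?C = "Cs ! i"
  have i: "i < length Cs" using Suc.prems by simp
  have C: "circuit E indep ?C" using assms(2) i by simp
  obtain e where e: "e \<in> ?C" "e \<notin> ?A"
    using proper_seq_new_elem[OF assms(1) i circuit_nonempty[OF C]] .
  have B: "?B = ?A \<union> ?C" by (rule upto_union_Suc[OF i])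
  have "finite ?B"
    using assms(2) upto_union_subset finite_ground finite_subset unfolding circuit_def by metis
  then have "nullity indep ?A + 1 \<le> nullity indep (?B - {e}) + 1"
    using B e nullity_mono[of ?A "?B - {e}"] by auto
  also have "\<dots> = nullity indep ?B"
    using nullity_Diff_circuit_elem[OF C e(1)] B \<open>finite ?B\<close> by simp
  finally show ?case using Suc i by simp
qed

lemma subset_cl_if_rk_eq:
  assumes "X \<subseteq> Y" "Y \<subseteq> E" "rk indep Y = rk indep X"
  shows "Y \<subseteq> cl E indep X"
proof
  fix e assume "e \<in> Y"
  then have "rk indep X \<le> rk indep (insert e X)" "rk indep (insert e X) \<le> rk indep Y"
    using assms(1) by (auto intro: rk_mono)
  then show "e \<in> cl E indep X" using assms \<open>e \<in> Y\<close> unfolding cl_def by auto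
qed

lemma coloop_restr_if_rk_Diff_less:
  assumes "X \<subseteq> Y" "e \<in> X" "rk indep (Y - {e}) < rk indep X"
  shows "coloop X (restr_indep indep X) e"
proof -
  have "e \<in> B" if B: "basis X (restr_indep indep X) B" for B
  proof (rule ccontr)
    assume "e \<notin> B"
    then have "B \<subseteq> Y - {e}" "indep B"
      using B assms(1) unfolding basis_def restr_indep_def by auto
    then have "card B \<le> rk indep (Y - {e})" by (rule card_le_rk)
    then show False using assms(3) card_basis_restr[OF B] by simp
  qed
  then show ?thesis using assms(2) unfolding coloop_def by blast
qed

end

theorem lemma3p2:
  fixes E :: "'a set" and indep :: "'a set \<Rightarrow> bool"
    and \<C> :: "'a set set" and X :: "'a set" and Cs :: "'a set list"
  assumes "matroid E indep"
    and "\<forall>C\<in>\<C>. circuit E indep C"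
    and "X \<subseteq> E"
    and "proper_seq Cs" and "family_seq \<C> Cs"
  shows "int (rk indep X) \<le> int (card (X \<union> upto_union Cs (length Cs))) - int (length Cs) \<and>
         (int (rk indep X) = int (card (X \<union> upto_union Cs (length Cs))) - int (length Cs) \<longrightarrow>
           upto_union Cs (length Cs) \<subseteq> cl E indep X \<and>
           (\<forall>e \<in> X - upto_union Cs (length Cs). coloop X (restr_indep indep X) e))"
proof -
  note M = assms(1)
  let ?U = "upto_union Cs (length Cs)" and ?Z = "X \<union> upto_union Cs (length Cs)"
  have circuits: "\<forall>C\<in>set Cs. circuit E indep C" using assms(2,5) unfolding family_seq_def by blast
  have "?U \<subseteq> E" using circuits upto_union_subset unfolding circuit_def by metis
  then have Z: "?Z \<subseteq> E" "finite ?Z" using assms(3) finite_ground[OF M] finite_subset by auto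
  have "int (length Cs) \<le> nullity indep ?U" using nullity_upto_union_ge[OF M assms(4) circuits] by simp
  then have null: "int (length Cs) \<le> nullity indep A" if "?U \<subseteq> A" "A \<subseteq> ?Z" for A
    using nullity_mono[OF M that(1)] finite_subset[OF that(2) Z(2)] by simp
  have rk_XZ: "rk indep X \<le> rk indep ?Z" by (simp add: rk_mono[OF M])
  have null_Z: "int (length Cs) \<le> nullity indep ?Z" by (rule null) auto
  show ?thesis
  proof (intro conjI impI)
    show "int (rk indep X) \<le> int (card ?Z) - int (length Cs)"
      using null_Z rk_XZ unfolding nullity_def by simp
    assume eq: "int (rk indep X) = int (card ?Z) - int (length Cs)"
    then have "rk indep ?Z = rk indep X" using null_Z rk_XZ unfolding nullity_def by simp
    then have "?Z \<subseteq> cl E indep X" using subset_cl_if_rk_eq[OF M _ Z(1)] by blast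
    then show "?U \<subseteq> cl E indep X" by blast
    show "\<forall>e \<in> X - ?U. coloop X (restr_indep indep X) e"
    proof
      fix e assume e: "e \<in> X - ?U"
      then have "card ?Z = Suc (card (?Z - {e}))" using card_Suc_Diff1[OF Z(2), of e] by simp
      moreover have "int (length Cs) \<le> nullity indep (?Z - {e})" using e by (intro null) auto
      ultimately have "rk indep (?Z - {e}) < rk indep X" using eq unfolding nullity_def by simp
      then show "coloop X (restr_indep indep X) e"
        using coloop_restr_if_rk_Diff_less[OF M, of X ?Z] e by blast
    qed
  qed
qed

end
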